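(* Let $q\neq0$ and let $D\subseteq\mathbb C\setminus\{0\}$ satisfy $qD\subseteq D$. Suppose that for each integer $n\ge-1$ we are given functions $\tilde{\mathcal F}(\cdot;n),\tilde{\mathcal G}(\cdot;n):D\to\mathbb C$ and constants $\tilde\mu(n)$, with $\tilde\mu(-1)=0$ and $\tilde{\mathcal G}(z;-1)\neq0$ for all $z\in D$, satisfying for all $n\ge-1$ and $z\in D$ $$\tilde{\mathcal F}(qz;n+1)+\tilde{\mathcal G}(z;n+1)=\tilde{\mathcal F}(z;n)+\tilde{\mathcal G}(qz;n),$$ $$\tilde{\mathcal F}(z;n+1)\tilde{\mathcal G}(z;n+1)=\tilde{\mathcal F}(z;n)\tilde{\mathcal G}(z;n)+\tilde\mu(n)-\tilde\mu(n+1).$$ Define $\tilde{\mathcal P}_0\equiv1$ and, for $n\ge0$, $\tilde{\mathcal P}_{n+1}(z)=-\tilde{\mathcal G}(z;-1)\tilde{\mathcal P}_n(qz)+\tilde{\mathcal F}(z;n)\tilde{\mathcal P}_n(z)$. Then for every $n\ge0$: (i) $\tilde{\mathcal P}_n$ solves $$\tilde{\mathcal G}(qz;-1)\tilde{\mathcal P}_n(q^2z)-\big[\tilde{\mathcal F}(qz;n)+\tilde{\mathcal G}(z;n)\big]\tilde{\mathcal P}_n(qz)+\tilde{\mathcal F}(z;-1)\tilde{\mathcal P}_n(z)=0\quad(z\in D);$$ (ii) $-\tilde{\mathcal G}(z;-1)\tilde{\mathcal P}_{n+1}(qz)+\tilde{\mathcal G}(z;n)\tilde{\mathcal P}_{n+1}(z)=-\tilde\mu(n)\tilde{\mathcal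 P}_n(z)$; (iii) for $n\ge1$, $\tilde{\mathcal P}_{n+1}(z)+\tilde\mu(n-1)\tilde{\mathcal P}_{n-1}(z)=\big(\tilde{\mathcal F}(z;n)-\tilde{\mathcal G}(z;n-1)\big)\tilde{\mathcal P}_n(z)$. Moreover, if in addition there are constants $c_0(n),c_1(n)$ with $\tilde{\mathcal F}(z;n)-\tilde{\mathcal G}(z;n-1)=c_0(n)\chi(z)+c_1(n)$ for all $n\ge0$ and $z\in D$, then each $\tilde{\mathcal P}_n(z)$ is a polynomial in $\chi(z)$ of degree at most $n$.
   Context: $\chi(z)=\frac{z+z^{-1}}{2}$. The two displayed equations are the (q-version) Infeld–Hull factorization system: they express that, with $u_2(z)=-\tilde{\mathcal G}(z;-1)$, the operators $(u_2(z)\mathbf E_q+\tilde{\mathcal G}(z;n))(u_2(z)\mathbf E_q+\tilde{\mathcal F}(z;n))$ and $(u_2(z)\mathbf E_q+\tilde{\mathcal F}(z;n))(u_2(z)\mathbf E_q+\tilde{\mathcal G}(z;n))$ differ from consecutive members of one family of second-order operators by constants, where $(\mathbf E_qf)(z)=f(qz)$. *)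

theory Defs
  imports Complex_Main "HOL-Computational_Algebra.Polynomial"
begin

definition chi :: "complex \<Rightarrow> complex" where
  "chi z = (z + inverse z) / 2"

fun Pt :: "complex \<Rightarrow> (complex \<Rightarrow> int \<Rightarrow> complex) \<Rightarrow> (complex \<Rightarrow> int \<Rightarrow> complex)
            \<Rightarrow> nat \<Rightarrow> complex \<Rightarrow> complex" where
  "Pt q F G 0 z = 1"
| "Pt q F G (Suc n) z = - G z (-1) * Pt q F G n (q * z) + F z (int n) * Pt q F G n z"

end

theory Submission
  imports Defs
begin

(* With u2(z) = -G(z;-1), put B_n = u2 E_q + F(.;n) (raising) and A_n = u2 E_q + G(.;n)
   (lowering), so that P_{n+1} = B_n P_n.  The two hypotheses on F, G, mu say precisely that
   A_n B_n = G(.;-1) L_n - mu(n) and B_n A_n = G(.;-1) L_{n+1} - mu(n), where L_n is the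
   second-order operator of (i).  Hence L_n P_n = 0 passes from n to n+1 by applying B_n to
   A_n B_n P_n + mu(n) P_n = 0; (ii) is A_n B_n P_n = -mu(n) P_n; and (iii) is the difference of
   B_n P_n and A_{n-1} P_n.  Finally a three-term recurrence whose coefficients are linear in
   chi produces polynomials in chi. *)

lemma three_term_recurrence_poly:
  fixes P :: "nat \<Rightarrow> 'a \<Rightarrow> 'b::comm_ring_1" and x :: "'a \<Rightarrow> 'b"
  assumes P0: "\<And>z. z \<in> D \<Longrightarrow> P 0 z = 1"
    and P1: "\<And>z. z \<in> D \<Longrightarrow> P 1 z = a 0 * x z + b 0"
    and rec: "\<And>n z. z \<in> D \<Longrightarrow>
                P (Suc (Suc n)) z = (a (Suc n) * x z + b (Suc n)) * P (Suc n) z - m n * P n z"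
  shows "\<exists>p. degree p \<le> n \<and> (\<forall>z\<in>D. P n z = poly p (x z))"
proof (induction n rule: induct_nat_012)
  case 0
  show ?case using P0 by (intro exI[of _ 1]) simp
next
  case 1
  show ?case using P1 by (intro exI[of _ "[:b 0, a 0:]"]) (simp add: algebra_simps)
next
  case (ge2 n)
  then obtain p r where p: "degree p \<le> n" "\<forall>z\<in>D. P n z = poly p (x z)"
    and r: "degree r \<le> Suc n" "\<forall>z\<in>D. P (Suc n) z = poly r (x z)"
    by blast
  let ?s = "[:b (Suc n), a (Suc n):] * r - smult (m n) p"
  have "degree [:b (Suc n), a (Suc n):] \<le> 1"
    by simp
  then have "degree ([:b (Suc n), a (Suc n):] * r) \<le> Suc (Suc n)"
    using degree_mult_le[of "[:b (Suc n), a (Suc n):]" r] r(1) by linarith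
  moreover have "degree (smult (m n) p) \<le> Suc (Suc n)"
    using degree_smult_le[of "m n" p] p(1) by simp
  ultimately have "degree ?s \<le> Suc (Suc n)"
    using degree_diff_le by blast
  moreover have "\<forall>z\<in>D. P (Suc (Suc n)) z = poly ?s (x z)"
  proof
    fix z assume "z \<in> D"
    then show "P (Suc (Suc n)) z = poly ?s (x z)"
      using rec[of z n] p(2) r(2) by (simp add: algebra_simps)
  qed
  ultimately show ?case by blast
qed

lemma shift_twice: "(q::complex) * (q * z) = q\<^sup>2 * z"
  by (simp add: power2_eq_square)

locale q_factorization =
  fixes q :: complex and D :: "complex set"
    and F G :: "complex \<Rightarrow> int \<Rightarrow> complex" and mu :: "int \<Rightarrow> complex"
  assumes shift_closed: "z \<in> D \<Longrightarrow> q * z \<in> D"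
    and G_nonzero: "z \<in> D \<Longrightarrow> G z (-1) \<noteq> 0"
    and mu_start: "mu (-1) = 0"
    and sum_rel: "n \<ge> -1 \<Longrightarrow> z \<in> D \<Longrightarrow> F (q * z) (n + 1) + G z (n + 1) = F z n + G (q * z) n"
    and prod_rel: "n \<ge> -1 \<Longrightarrow> z \<in> D \<Longrightarrow>
                     F z (n + 1) * G z (n + 1) = F z n * G z n + mu n - mu (n + 1)"
begin

definition raising :: "nat \<Rightarrow> (complex \<Rightarrow> complex) \<Rightarrow> complex \<Rightarrow> complex" where
  "raising n f z = - G z (-1) * f (q * z) + F z (int n) * f z"

definition lowering :: "nat \<Rightarrow> (complex \<Rightarrow> complex) \<Rightarrow> complex \<Rightarrow> complex" where
  "lowering n f z = - G z (-1) * f (q * z) + G z (int n) * f z"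

definition second_order :: "nat \<Rightarrow> (complex \<Rightarrow> complex) \<Rightarrow> complex \<Rightarrow> complex" where
  "second_order n f z = G (q * z) (-1) * f (q\<^sup>2 * z)
     - (F (q * z) (int n) + G z (int n)) * f (q * z) + F z (-1) * f z"

lemma Pt_Suc_raising: "Pt q F G (Suc n) = raising n (Pt q F G n)"
  by (simp add: raising_def fun_eq_iff)

lemma FG_product: "z \<in> D \<Longrightarrow> F z (int n) * G z (int n) = F z (-1) * G z (-1) - mu (int n)"
proof (induction n)
  case 0
  then show ?case using prod_rel[of "-1" z] mu_start by simp
next
  case (Suc n)
  then show ?case using prod_rel[of "int n" z] by (simp add: add.commute)
qed

lemma sum_rel_nat: "z \<in> D \<Longrightarrow>
    F (q * z) (int (Suc n)) + G z (int (Suc n)) = F z (int n) + G (q * z) (int n)"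
  using sum_rel[of "int n" z] by (simp add: add.commute)

lemma lowering_raising:
  assumes "z \<in> D"
  shows "lowering n (raising n f) z = G z (-1) * second_order n f z - mu (int n) * f z"
proof -
  have "lowering n (raising n f) z - (G z (-1) * second_order n f z - mu (int n) * f z)
      = (F z (int n) * G z (int n) - (F z (-1) * G z (-1) - mu (int n))) * f z"
    by (simp add: lowering_def raising_def second_order_def shift_twice algebra_simps)
  then show ?thesis
    using FG_product[OF assms, of n] by simp
qed

lemma raising_lowering:
  assumes "z \<in> D"
  shows "raising n (lowering n f) z = G z (-1) * second_order (Suc n) f z - mu (int n) * f z"
proof -
  have "raising n (lowering n f) z - (G z (-1) * second_order (Suc n) f z - mu (int n) * f z)
      = (F z (int n) * G z (int n) - (F z (-1) * G z (-1) - mu (int n))) * f z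
        + G z (-1) * (F (q * z) (int (Suc n)) + G z (int (Suc n))
                      - (F z (int n) + G (q * z) (int n))) * f (q * z)"
    by (simp add: lowering_def raising_def second_order_def shift_twice algebra_simps)
  then show ?thesis
    using FG_product[OF assms, of n] sum_rel_nat[OF assms, of n] by simp
qed

lemma raising_vanishing:
  assumes "\<forall>w\<in>D. f w = 0" and "z \<in> D"
  shows "raising n f z = 0"
  using assms shift_closed by (simp add: raising_def)

lemma raising_minus_lowering: "raising n f z - lowering m f z = (F z (int n) - G z (int m)) * f z"
  by (simp add: raising_def lowering_def algebra_simps)

lemma second_order_Pt: "z \<in> D \<Longrightarrow> second_order n (Pt q F G n) z = 0"
proof (induction n arbitrary: z)
  case 0
  then show ?case using sum_rel[of "-1" z] by (simp add: second_order_def)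
next
  case (Suc n)
  let ?Pn = "Pt q F G n"
  let ?h = "\<lambda>w. lowering n (raising n ?Pn) w + mu (int n) * ?Pn w"
  have "\<forall>w\<in>D. ?h w = 0"
    using Suc.IH by (simp add: lowering_raising)
  then have "raising n ?h z = 0"
    using Suc.prems by (rule raising_vanishing)
  moreover have "raising n ?h z
      = raising n (lowering n (raising n ?Pn)) z + mu (int n) * raising n ?Pn z"
    by (simp add: raising_def algebra_simps)
  ultimately have "G z (-1) * second_order (Suc n) (raising n ?Pn) z = 0"
    using raising_lowering[OF Suc.prems, of n "raising n ?Pn"] by simp
  then show ?case
    using G_nonzero[OF Suc.prems] by (simp add: Pt_Suc_raising)
qed

lemma lowering_Pt: "z \<in> D \<Longrightarrow> lowering n (Pt q F G (Suc n)) z = - mu (int n) * Pt q F G n z"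
  using lowering_raising second_order_Pt by (simp add: Pt_Suc_raising)

lemma Pt_three_term_recurrence:
  assumes "z \<in> D"
  shows "Pt q F G (Suc (Suc n)) z + mu (int n) * Pt q F G n z
         = (F z (int (Suc n)) - G z (int n)) * Pt q F G (Suc n) z"
  using raising_minus_lowering[of "Suc n" "Pt q F G (Suc n)" z n] lowering_Pt[OF assms, of n]
  by (simp only: Pt_Suc_raising[of "Suc n"]) simp

lemma Pt_polynomial_in_chi:
  assumes lin: "\<And>n z. z \<in> D \<Longrightarrow> F z (int n) - G z (int n - 1) = c0 n * chi z + c1 n"
  shows "\<exists>p. degree p \<le> n \<and> (\<forall>z\<in>D. Pt q F G n z = poly p (chi z))"
proof (rule three_term_recurrence_poly[where a = c0 and b = c1 and m = "\<lambda>n. mu (int n)"])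
  show "Pt q F G 1 z = c0 0 * chi z + c1 0" if "z \<in> D" for z
    using lin[OF that, of 0] by (simp add: One_nat_def)
  show "Pt q F G (Suc (Suc n)) z = (c0 (Suc n) * chi z + c1 (Suc n)) * Pt q F G (Suc n) z
          - mu (int n) * Pt q F G n z" if "z \<in> D" for n z
  proof -
    have "F z (int (Suc n)) - G z (int n) = c0 (Suc n) * chi z + c1 (Suc n)"
      using lin[OF that, of "Suc n"] by simp
    then show ?thesis
      using Pt_three_term_recurrence[OF that, of n] by (simp only: eq_diff_eq)
  qed
qed simp

end

theorem proposition2:
  fixes q :: complex and D :: "complex set"
    and F G :: "complex \<Rightarrow> int \<Rightarrow> complex" and mu :: "int \<Rightarrow> complex"
  assumes hq: "q \<noteq> 0"
    and hD: "D \<subseteq> - {0}"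
    and hqD: "(\<lambda>z. q * z) ` D \<subseteq> D"
    and hmu: "mu (-1) = 0"
    and hG: "\<forall>z\<in>D. G z (-1) \<noteq> 0"
    and h1: "\<forall>n\<ge>-1. \<forall>z\<in>D. F (q * z) (n + 1) + G z (n + 1) = F z n + G (q * z) n"
    and h2: "\<forall>n\<ge>-1. \<forall>z\<in>D. F z (n + 1) * G z (n + 1) = F z n * G z n + mu n - mu (n + 1)"
  shows "(\<forall>n::nat. \<forall>z\<in>D.
            G (q * z) (-1) * Pt q F G n (q\<^sup>2 * z)
            - (F (q * z) (int n) + G z (int n)) * Pt q F G n (q * z)
            + F z (-1) * Pt q F G n z = 0)
       \<and> (\<forall>n::nat. \<forall>z\<in>D.
            - G z (-1) * Pt q F G (Suc n) (q * z) + G z (int n) * Pt q F G (Suc n) z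
            = - mu (int n) * Pt q F G n z)
       \<and> (\<forall>n::nat. n \<ge> 1 \<longrightarrow> (\<forall>z\<in>D.
            Pt q F G (Suc n) z + mu (int n - 1) * Pt q F G (n - 1) z
            = (F z (int n) - G z (int n - 1)) * Pt q F G n z))
       \<and> ((\<exists>c0 c1 :: nat \<Rightarrow> complex. \<forall>n::nat. \<forall>z\<in>D.
             F z (int n) - G z (int n - 1) = c0 n * chi z + c1 n)
          \<longrightarrow> (\<forall>n::nat. \<exists>p :: complex poly. degree p \<le> n \<and>
                 (\<forall>z\<in>D. Pt q F G n z = poly p (chi z))))"
proof -
  \<comment> \<open>The conclusions hold without hq and hD.\<close>
  interpret q_factorization q D F G mu
    by unfold_locales (use hqD hG hmu h1 h2 in auto)
  have iii: "Pt q F G (Suc n) z + mu (int n - 1) * Pt q F G (n - 1) z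
             = (F z (int n) - G z (int n - 1)) * Pt q F G n z" if "n \<ge> 1" "z \<in> D" for n z
    using that Pt_three_term_recurrence[of z "n - 1"] by (cases n) simp_all
  show ?thesis
    using second_order_Pt lowering_Pt iii Pt_polynomial_in_chi
    by (simp add: second_order_def lowering_def) blast
qed

end
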